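(* Let $\mathbf i,\mathbf i'\in I^{(\infty)}$ be related by a 6-move $\mathbf i'=\zeta_k\mathbf i$. Then $$\widetilde B^{\mathbf i'}=\sigma_{k+4}\sigma_{k+2}\sigma_k\,\mu_k\mu_{k+3}\mu_{k+2}\mu_k\mu_{k+1}\mu_{k+3}\mu_k\mu_{k+2}\mu_{k+1}\mu_k\,\widetilde B^{\mathbf i}$$ (mutations applied right to left: in directions $k,k+1,k+2,k,k+3,k+1,k,k+2,k+3,k$, then the permutations).
   Context: Let $\mathfrak g$ be a complex finite-dimensional simple Lie algebra with index set $I$ and Cartan matrix $\mathsf C=(\mathsf c_{i,j})_{i,j\in I}$. $\mathbb N=\{1,2,\dots\}$, $[a]_+=\max(a,0)$. $I^{(\infty)}$ is the set of sequences $\mathbf i=(i_u)_{u\in\mathbb N}\in I^{\mathbb N}$ in which every element of $I$ occurs infinitely often; $u^+=\min\{v>u:i_v=i_u\}$, $u^-=\max(\{v<u:i_v=i_u\}\cup\{0\})$. The exchange matrix $\widetilde B^{\mathbf i}=(b_{u,v})_{u,v\in\mathbb N}$: $b_{u,v}=1$ if $v=u^+$; $-1$ if $v=u^-$; $\mathsf c_{i_u,i_v}$ if $u<v<u^+<v^+$; $-\mathsf c_{i_u,i_v}$ if $v<u<v^+<u^+$; $0$ otherwise. Matrix mutation: $\mu_k(\widetilde B)=E\widetilde BF$ with $e_{u,v}=\delta_{u,v}$ ($v\ne k$), $e_{k,k}=-1$, $e_{u,k}=[-b_{u,k}]_+$ ($u\ne k$), $f_{u,v}=\delta_{u,v}$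 ($u\ne k$), $f_{k,k}=-1$, $f_{k,v}=[b_{k,v}]_+$ ($v\ne k$). For a permutation $\pi$ of $\mathbb N$, $(\pi\widetilde B)_{u,v}=b_{\pi^{-1}(u),\pi^{-1}(v)}$; $\sigma_k$ is the transposition of $k,k+1$. A 6-move $\mathbf i'=\zeta_k\mathbf i$ means $i_k=i_{k+2}=i_{k+4}=i'_{k+1}=i'_{k+3}=i'_{k+5}$, $i_{k+1}=i_{k+3}=i_{k+5}=i'_k=i'_{k+2}=i'_{k+4}$, $i_u=i'_u$ for $u\notin[k,k+5]$, and $\mathsf c_{i_{k+1},i_k}\mathsf c_{i_k,i_{k+1}}=3$ (so $\mathfrak g$ is of type $G_2$). *)

theory Defs
  imports Complex_Main "HOL-Library.Infinite_Set"
begin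

definition is_simple_cartan_matrix :: "('i::finite \<Rightarrow> 'i \<Rightarrow> int) \<Rightarrow> bool" where
  "is_simple_cartan_matrix C \<longleftrightarrow>
     (\<forall>i. C i i = 2) \<and>
     (\<forall>i j. i \<noteq> j \<longrightarrow> C i j \<le> 0) \<and>
     (\<forall>i j. C i j = 0 \<longleftrightarrow> C j i = 0) \<and>
     (\<exists>d :: 'i \<Rightarrow> int. (\<forall>i. d i > 0) \<and> (\<forall>i j. d i * C i j = d j * C j i) \<and>
        (\<forall>x :: 'i \<Rightarrow> real. x \<noteq> (\<lambda>_. 0) \<longrightarrow>
            (\<Sum>i\<in>UNIV. \<Sum>j\<in>UNIV. x i * real_of_int (d i * C i j) * x j) > 0)) \<and>
     (\<forall>J :: 'i set. J \<noteq> {} \<and> J \<noteq> UNIV \<longrightarrow> (\<exists>j\<in>J. \<exists>k\<in>-J. C j k \<noteq> 0))"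

text \<open>Sequences indexed by the positive integers (the value at 0 is irrelevant).\<close>
definition I_infty :: "(nat \<Rightarrow> 'i) set" where
  "I_infty = {ii. \<forall>a. infinite {u. 1 \<le> u \<and> ii u = a}}"

definition succ_idx :: "(nat \<Rightarrow> 'i) \<Rightarrow> nat \<Rightarrow> nat" where
  "succ_idx ii u = (LEAST v. u < v \<and> ii v = ii u)"

definition pred_idx :: "(nat \<Rightarrow> 'i) \<Rightarrow> nat \<Rightarrow> nat" where
  "pred_idx ii u = Max ({v. 1 \<le> v \<and> v < u \<and> ii v = ii u} \<union> {0})"

type_synonym imat = "nat \<Rightarrow> nat \<Rightarrow> int"

text \<open>Exchange matrix of ii (entries with an index 0 are set to 0; they lie outside N).\<close>
definition exch_matrix :: "('i \<Rightarrow> 'i \<Rightarrow> int) \<Rightarrow> (nat \<Rightarrow> 'i) \<Rightarrow> imat" where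
  "exch_matrix C ii u v =
     (if u = 0 \<or> v = 0 then 0
      else if v = succ_idx ii u then 1
      else if v = pred_idx ii u then -1
      else if u < v \<and> v < succ_idx ii u \<and> succ_idx ii u < succ_idx ii v then C (ii u) (ii v)
      else if v < u \<and> u < succ_idx ii v \<and> succ_idx ii v < succ_idx ii u then - C (ii u) (ii v)
      else 0)"

text \<open>Product of N x N matrices (summing over the indices w \<ge> 1 contributing nonzero terms;
for the matrices used below these are finitely many).\<close>
definition mat_mul :: "imat \<Rightarrow> imat \<Rightarrow> imat" where
  "mat_mul A B u v = (\<Sum>w\<in>{w. 1 \<le> w \<and> A u w \<noteq> 0 \<and> B w v \<noteq> 0}. A u w * B w v)"

definition pos_part :: "int \<Rightarrow> int" where
  "pos_part a = max a 0"

definition mutE :: "nat \<Rightarrow> imat \<Rightarrow> imat" where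
  "mutE k B u v = (if v \<noteq> k then (if u = v then 1 else 0)
                   else if u = k then -1 else pos_part (- B u k))"

definition mutF :: "nat \<Rightarrow> imat \<Rightarrow> imat" where
  "mutF k B u v = (if u \<noteq> k then (if u = v then 1 else 0)
                   else if v = k then -1 else pos_part (B k v))"

definition mutate :: "nat \<Rightarrow> imat \<Rightarrow> imat" where
  "mutate k B = mat_mul (mat_mul (mutE k B) B) (mutF k B)"

definition perm_mat :: "(nat \<Rightarrow> nat) \<Rightarrow> imat \<Rightarrow> imat" where
  "perm_mat \<pi> B u v = B (inv \<pi> u) (inv \<pi> v)"

definition swap_adj :: "nat \<Rightarrow> nat \<Rightarrow> nat" where
  "swap_adj k u = (if u = k then k + 1 else if u = k + 1 then k else u)"

definition six_move :: "('i \<Rightarrow> 'i \<Rightarrow> int) \<Rightarrow> nat \<Rightarrow> (nat \<Rightarrow> 'i) \<Rightarrow> (nat \<Rightarrow> 'i) \<Rightarrow> bool" where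
  "six_move C k ii ii' \<longleftrightarrow> 1 \<le> k \<and>
     ii k = ii (k+2) \<and> ii (k+2) = ii (k+4) \<and> ii (k+4) = ii' (k+1) \<and>
     ii' (k+1) = ii' (k+3) \<and> ii' (k+3) = ii' (k+5) \<and>
     ii (k+1) = ii (k+3) \<and> ii (k+3) = ii (k+5) \<and> ii (k+5) = ii' k \<and>
     ii' k = ii' (k+2) \<and> ii' (k+2) = ii' (k+4) \<and>
     (\<forall>u. 1 \<le> u \<and> (u < k \<or> k + 5 < u) \<longrightarrow> ii u = ii' u) \<and>
     C (ii (k+1)) (ii k) * C (ii k) (ii (k+1)) = 3"

end

theory Submission
  imports Defs
begin

(* Inside the window k..k+5 the word ii reads a b a b a b and ii' reads b a b a b a; elsewhere they
   agree. So ii' is ii composed with the involution exchanging k+2j and k+2j+1, which preserves the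
   order of positions carrying the same letter; hence succ and pred of ii' are those of ii conjugated
   by it, and the two exchange matrices agree after this relabelling at every entry with an index
   outside the window nodes pred k, pred (k+1), k, ..., k+5. Mutations in directions k..k+3 do not
   change such entries, as the rows and columns k..k+3 vanish off the window nodes. On the 8 x 8
   block of window nodes both exchange matrices are determined by C a b, C b a and four order
   relations, and the identity becomes a finite computation, valid because {C a b, C b a} = {-1, -3}. *)

(* Index 0 lies outside the index set: mat_mul only sums over w \<ge> 1, so mutate agrees with the
   closed form mutation only on matrices vanishing at 0. *)
definition null_at_0 :: "imat \<Rightarrow> bool" where
  "null_at_0 B \<longleftrightarrow> (\<forall>v. B 0 v = 0) \<and> (\<forall>u. B u 0 = 0)"

definition mutE_mul :: "nat \<Rightarrow> imat \<Rightarrow> imat" where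
  "mutE_mul m B u w = (if u = m then - B m w else B u w + pos_part (- B u m) * B m w)"

definition mutation :: "nat \<Rightarrow> imat \<Rightarrow> imat" where
  "mutation m B u v =
     (if v = m then - mutE_mul m B u m else mutE_mul m B u v + mutE_mul m B u m * pos_part (B m v))"

lemma mat_mul_eq_sum:
  assumes "finite F" "\<forall>w\<in>F. 1 \<le> w" "\<And>w. 1 \<le> w \<Longrightarrow> A u w \<noteq> 0 \<Longrightarrow> B w v \<noteq> 0 \<Longrightarrow> w \<in> F"
  shows "mat_mul A B u v = (\<Sum>w\<in>F. A u w * B w v)"
  unfolding mat_mul_def by (rule sum.mono_neutral_left) (use assms in auto)

lemma mat_mul_mutE:
  assumes "1 \<le> m" "null_at_0 B"
  shows "mat_mul (mutE m B) B u w = mutE_mul m B u w"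
proof -
  have "mat_mul (mutE m B) B u w = (\<Sum>x\<in>{u,m} - {0}. mutE m B u x * B x w)"
    by (rule mat_mul_eq_sum) (auto simp: mutE_def split: if_splits)
  then show ?thesis
    using assms by (cases "u = 0"; cases "u = m") (auto simp: mutE_mul_def mutE_def null_at_0_def)
qed

lemma mutate_eq_mutation:
  assumes "1 \<le> m" "null_at_0 B"
  shows "mutate m B = mutation m B"
proof (intro ext)
  fix u v
  have "mutate m B u v = (\<Sum>x\<in>{v,m} - {0}. mat_mul (mutE m B) B u x * mutF m B x v)"
    unfolding mutate_def by (rule mat_mul_eq_sum) (auto simp: mutF_def split: if_splits)
  then show "mutate m B u v = mutation m B u v"
    using assms by (cases "v = 0"; cases "v = m")
      (auto simp: mat_mul_mutE mutation_def mutF_def mutE_mul_def null_at_0_def pos_part_def)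
qed

lemma null_at_0_mutation: "1 \<le> m \<Longrightarrow> null_at_0 B \<Longrightarrow> null_at_0 (mutation m B)"
  by (auto simp: null_at_0_def mutation_def mutE_mul_def pos_part_def)

lemma null_at_0_fold_mutation: "\<forall>m\<in>set ms. 1 \<le> m \<Longrightarrow> null_at_0 B \<Longrightarrow> null_at_0 (fold mutation ms B)"
  by (induction ms arbitrary: B) (simp_all add: null_at_0_mutation)

lemma fold_mutate_eq_fold_mutation:
  "\<forall>m\<in>set ms. 1 \<le> m \<Longrightarrow> null_at_0 B \<Longrightarrow> fold mutate ms B = fold mutation ms B"
  by (induction ms arbitrary: B) (simp_all add: mutate_eq_mutation null_at_0_mutation)

lemma mutation_cong:
  assumes "\<forall>a\<in>S. \<forall>b\<in>S. B a b = B' a b" "m \<in> S" "u \<in> S" "v \<in> S"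
  shows "mutation m B u v = mutation m B' u v"
  using assms by (simp add: mutation_def mutE_mul_def)

lemma fold_mutation_cong:
  assumes "\<forall>a\<in>S. \<forall>b\<in>S. B a b = B' a b" "set ms \<subseteq> S" "u \<in> S" "v \<in> S"
  shows "fold mutation ms B u v = fold mutation ms B' u v"
  using assms
proof (induction ms arbitrary: B B')
  case (Cons m ms)
  then show ?case by (simp add: mutation_cong)
qed simp

lemma mutation_row_unchanged: "B u m = 0 \<Longrightarrow> u \<noteq> m \<Longrightarrow> mutation m B u v = B u v"
  by (simp add: mutation_def mutE_mul_def pos_part_def)

lemma mutation_col_unchanged: "B m v = 0 \<Longrightarrow> v \<noteq> m \<Longrightarrow> mutation m B u v = B u v"
  by (simp add: mutation_def mutE_mul_def pos_part_def)

lemma fold_mutation_row_unchanged: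
  "\<forall>m\<in>set ms. B u m = 0 \<and> u \<noteq> m \<Longrightarrow> fold mutation ms B u v = B u v"
proof (induction ms arbitrary: B)
  case (Cons m ms)
  then show ?case by (simp add: mutation_row_unchanged)
qed simp

lemma fold_mutation_col_unchanged:
  "\<forall>m\<in>set ms. B m v = 0 \<and> v \<noteq> m \<Longrightarrow> fold mutation ms B u v = B u v"
proof (induction ms arbitrary: B)
  case (Cons m ms)
  then show ?case by (simp add: mutation_col_unchanged)
qed simp

lemma mutation_reindex:
  assumes "\<And>x. x \<in> {u, v} \<Longrightarrow> f x = f m \<Longrightarrow> x = m"
  shows "mutation (f m) B (f u) (f v) = mutation m (\<lambda>a b. B (f a) (f b)) u v"
  using assms by (auto simp: mutation_def mutE_mul_def)

lemma fold_mutation_reindex: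
  assumes "\<And>x m. x \<in> S \<Longrightarrow> m \<in> set ms \<Longrightarrow> f x = f m \<Longrightarrow> x = m" "set ms \<subseteq> S" "u \<in> S" "v \<in> S"
  shows "fold mutation (map f ms) B (f u) (f v) = fold mutation ms (\<lambda>a b. B (f a) (f b)) u v"
  using assms
proof (induction ms arbitrary: B)
  case (Cons m ms)
  have "fold mutation (map f ms) (mutation (f m) B) (f u) (f v)
      = fold mutation ms (\<lambda>a b. mutation (f m) B (f a) (f b)) u v"
    using Cons by simp
  also have "\<dots> = fold mutation ms (mutation m (\<lambda>a b. B (f a) (f b))) u v"
    using Cons.prems by (intro fold_mutation_cong[where S = S]) (auto intro!: mutation_reindex)
  finally show ?case by simp
qed simp

definition block :: "imat \<Rightarrow> nat list \<Rightarrow> int list list" where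
  "block B xs = map (\<lambda>u. map (B u) xs) xs"

(* Blocks are stored as lists of rows so that the finite computation in hexagon_block_mutation
   evaluates each intermediate matrix once instead of re-expanding the nested mutation formula. *)
definition list_mutation :: "nat \<Rightarrow> int list list \<Rightarrow> int list list" where
  "list_mutation m L = block (mutation m (\<lambda>a b. L ! a ! b)) [0..<length L]"

lemma length_list_mutation [simp]: "length (list_mutation m L) = length L"
  by (simp add: list_mutation_def block_def)

lemma list_mutation_nth:
  "a < length L \<Longrightarrow> b < length L \<Longrightarrow> list_mutation m L ! a ! b = mutation m (\<lambda>a b. L ! a ! b) a b"
  by (simp add: list_mutation_def block_def)

lemma block_cong:
  "(\<And>u v. u \<in> set xs \<Longrightarrow> v \<in> set xs \<Longrightarrow> B u v = B' u v) \<Longrightarrow> block B xs = block B' xs"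
  by (simp add: block_def)

lemma block_reindex: "block (\<lambda>a b. B (f a) (f b)) xs = block B (map f xs)"
  by (simp add: block_def comp_def)

lemma block_eq_block_mapD:
  assumes "block B xs = block B' (map f xs)" "u \<in> set xs" "v \<in> set xs"
  shows "B u v = B' (f u) (f v)"
proof -
  obtain i j where "i < length xs" "j < length xs" "u = xs ! i" "v = xs ! j"
    using assms(2,3) by (metis in_set_conv_nth)
  then show ?thesis
    using arg_cong[OF assms(1), of "\<lambda>L. L ! i ! j"] by (simp add: block_def)
qed

lemma fold_list_mutation_nth:
  assumes "set ms \<subseteq> {..<length L}" "a < length L" "b < length L"
  shows "fold list_mutation ms L ! a ! b = fold mutation ms (\<lambda>a b. L ! a ! b) a b"
  using assms
proof (induction ms arbitrary: L)
  case (Cons m ms)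
  then have "fold list_mutation ms (list_mutation m L) ! a ! b
      = fold mutation ms (\<lambda>a b. list_mutation m L ! a ! b) a b"
    by simp
  also have "\<dots> = fold mutation ms (mutation m (\<lambda>a b. L ! a ! b)) a b"
    using Cons.prems by (intro fold_mutation_cong[where S = "{..<length L}"]) (auto simp: list_mutation_nth)
  finally show ?case by simp
qed simp

lemma fold_list_mutation_block:
  assumes "\<And>i m. i < length xs \<Longrightarrow> m \<in> set ms \<Longrightarrow> xs ! i = xs ! m \<Longrightarrow> i = m"
    and "set ms \<subseteq> {..<length xs}" "a < length xs" "b < length xs"
  shows "fold list_mutation ms (block B xs) ! a ! b = fold mutation (map ((!) xs) ms) B (xs ! a) (xs ! b)"
proof -
  have "fold list_mutation ms (block B xs) ! a ! b = fold mutation ms (\<lambda>a b. block B xs ! a ! b) a b"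
    using assms by (simp add: fold_list_mutation_nth block_def)
  also have "\<dots> = fold mutation ms (\<lambda>a b. B (xs ! a) (xs ! b)) a b"
    using assms by (intro fold_mutation_cong[where S = "{..<length xs}"]) (auto simp: block_def)
  also have "\<dots> = fold mutation (map ((!) xs) ms) B (xs ! a) (xs ! b)"
    using assms by (intro fold_mutation_reindex[symmetric, where S = "{..<length xs}"]) auto
  finally show ?thesis .
qed

(* The exchange matrix on the window nodes of a word reading x y x y x y at k..k+5
   (exch_matrix_window_block): ex, ey tell whether k, k+1 have a predecessor, P whether both do and
   pred k < pred (k+1), and sxy whether succ (k+4) < succ (k+5). *)
definition hexagon_block :: "int \<Rightarrow> int \<Rightarrow> bool \<Rightarrow> bool \<Rightarrow> bool \<Rightarrow> bool \<Rightarrow> int list list" where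
  "hexagon_block cxy cyx ex ey P sxy =
    [[0, if P then cxy else 0, if ex then 1 else 0, 0,0,0,0,0],
     [if P then -cyx else 0, 0, if ey then cyx else 0, if ey then 1 else 0, 0,0,0,0],
     [if ex then -1 else 0, if ey then -cxy else 0, 0, cxy, 1, 0,0,0],
     [0, if ey then -1 else 0, -cyx, 0, cyx, 1, 0, 0],
     [0,0,-1, -cxy, 0, cxy, 1, 0],
     [0,0,0,-1,-cyx,0,cyx,1],
     [0,0,0,0,-1,-cxy,0, if sxy then cxy else 0],
     [0,0,0,0,0,-1, if sxy then -cyx else 0, 0]]"

(* Positions 2..5 of the block are k..k+3, and [1,0,3,2,5,4,7,6] is window_swap read on the window
   nodes. This is the only place where C x y * C y x = 3 is used. *)
lemma hexagon_block_mutation: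
  assumes "(cxy, cyx) \<in> {(-1,-3), (-3,-1)}" "P \<longrightarrow> ex \<and> ey"
  shows "block (\<lambda>a b. fold list_mutation [2,3,4,2,5,3,2,4,5,2] (hexagon_block cxy cyx ex ey P sxy) ! a ! b)
           [1,0,3,2,5,4,7,6]
       = hexagon_block cyx cxy ey ex (ex \<and> ey \<and> \<not> P) (\<not> sxy)"
proof -
  from assms(1) consider "cxy = -1" "cyx = -3" | "cxy = -3" "cyx = -1" by auto
  then show ?thesis using assms(2)
    by cases (cases ex; cases ey; cases P; cases sxy;
      simp only: simp_thms; code_simp)+
qed

lemma succ_idx: "jj \<in> I_infty \<Longrightarrow> x < succ_idx jj x \<and> jj (succ_idx jj x) = jj x"
proof -
  assume "jj \<in> I_infty"
  then have "infinite {u. 1 \<le> u \<and> jj u = jj x}" by (auto simp: I_infty_def)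
  then obtain v where "x < v" "v \<in> {u. 1 \<le> u \<and> jj u = jj x}"
    using infinite_nat_iff_unbounded by blast
  then show ?thesis
    using LeastI[of "\<lambda>v. x < v \<and> jj v = jj x" v] unfolding succ_idx_def by simp
qed

lemma succ_idx_le: "x < z \<Longrightarrow> jj z = jj x \<Longrightarrow> succ_idx jj x \<le> z"
  unfolding succ_idx_def by (rule Least_le) simp

lemma succ_idx_eqI:
  "x < y \<Longrightarrow> jj y = jj x \<Longrightarrow> (\<And>z. x < z \<Longrightarrow> z < y \<Longrightarrow> jj z \<noteq> jj x) \<Longrightarrow> succ_idx jj x = y"
  unfolding succ_idx_def by (rule Least_equality) (auto simp: not_less[symmetric])

lemma finite_pred_idx_set: "finite ({v. 1 \<le> v \<and> v < (x::nat) \<and> jj v = jj x} \<union> {0})"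
  by (rule finite_subset[of _ "{..x}"]) auto

lemma pred_idx_ge: "1 \<le> v \<Longrightarrow> v < x \<Longrightarrow> jj v = jj x \<Longrightarrow> v \<le> pred_idx jj x"
  unfolding pred_idx_def by (rule Max_ge[OF finite_pred_idx_set]) auto

lemma pred_idx: "pred_idx jj x = 0 \<or> 1 \<le> pred_idx jj x \<and> pred_idx jj x < x \<and> jj (pred_idx jj x) = jj x"
  using Max_in[OF finite_pred_idx_set, of x jj] unfolding pred_idx_def by auto

lemma pred_idx_eqI:
  assumes "1 \<le> y" "y < x" "jj y = jj x" "\<And>z. y < z \<Longrightarrow> z < x \<Longrightarrow> jj z \<noteq> jj x"
  shows "pred_idx jj x = y"
  using pred_idx_ge[OF assms(1-3)] pred_idx[of jj x] assms(4)[of "pred_idx jj x"] by fastforce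

lemma pred_idx_eq_0I: "(\<And>z. 1 \<le> z \<Longrightarrow> z < x \<Longrightarrow> jj z \<noteq> jj x) \<Longrightarrow> pred_idx jj x = 0"
  using pred_idx[of jj x] by force

lemma succ_pred_idx:
  assumes "1 \<le> pred_idx jj x"
  shows "succ_idx jj (pred_idx jj x) = x"
proof (rule succ_idx_eqI)
  show "pred_idx jj x < x" "jj x = jj (pred_idx jj x)"
    using assms pred_idx[of jj x] by auto
  show "jj z \<noteq> jj (pred_idx jj x)" if "pred_idx jj x < z" "z < x" for z
    using that \<open>jj x = jj (pred_idx jj x)\<close> pred_idx_ge[of z x jj] by auto
qed

lemma pred_succ_idx: "jj \<in> I_infty \<Longrightarrow> 1 \<le> x \<Longrightarrow> pred_idx jj (succ_idx jj x) = x"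
  using succ_idx[of jj x] succ_idx_le[of x _ jj] by (intro pred_idx_eqI) force+

lemma succ_idx_conj:
  assumes "jj \<in> I_infty" "\<And>x. \<sigma> (\<sigma> x) = x" "\<And>x. 1 \<le> \<sigma> x \<longleftrightarrow> 1 \<le> x"
    and jj': "\<And>x. 1 \<le> x \<Longrightarrow> jj' x = jj (\<sigma> x)"
    and mono: "\<And>x y. 1 \<le> x \<Longrightarrow> 1 \<le> y \<Longrightarrow> jj' x = jj' y \<Longrightarrow> x < y \<longleftrightarrow> \<sigma> x < \<sigma> y"
    and x: "1 \<le> x"
  shows "succ_idx jj' x = \<sigma> (succ_idx jj (\<sigma> x))"
proof (rule succ_idx_eqI)
  let ?y = "\<sigma> (succ_idx jj (\<sigma> x))"
  have s: "\<sigma> x < \<sigma> ?y" "jj (\<sigma> ?y) = jj (\<sigma> x)"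
    using succ_idx[OF assms(1)] assms(2) by auto
  have y: "1 \<le> ?y" using s(1) assms(3)[of x] assms(3)[of ?y] x by linarith
  show "jj' ?y = jj' x" using s(2) jj' x y by simp
  then show "x < ?y" using mono[OF x y] s(1) by simp
  fix z assume z: "x < z" "z < ?y"
  show "jj' z \<noteq> jj' x"
  proof
    assume eq: "jj' z = jj' x"
    have "1 \<le> z" using z x by simp
    have "\<sigma> x < \<sigma> z" "\<sigma> z < \<sigma> ?y"
      using mono[OF x \<open>1 \<le> z\<close>] mono[OF \<open>1 \<le> z\<close> y] eq \<open>jj' ?y = jj' x\<close> z by auto
    moreover have "jj (\<sigma> z) = jj (\<sigma> x)" using eq jj' \<open>1 \<le> z\<close> x by simp
    ultimately show False using succ_idx_le[of "\<sigma> x" "\<sigma> z" jj] assms(2) by fastforce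
  qed
qed

lemma pred_idx_conj:
  assumes "\<And>x. \<sigma> (\<sigma> x) = x" "\<And>x. 1 \<le> \<sigma> x \<longleftrightarrow> 1 \<le> x"
    and jj': "\<And>x. 1 \<le> x \<Longrightarrow> jj' x = jj (\<sigma> x)"
    and mono: "\<And>x y. 1 \<le> x \<Longrightarrow> 1 \<le> y \<Longrightarrow> jj' x = jj' y \<Longrightarrow> x < y \<longleftrightarrow> \<sigma> x < \<sigma> y"
    and x: "1 \<le> x"
  shows "pred_idx jj' x = \<sigma> (pred_idx jj (\<sigma> x))"
proof (cases "pred_idx jj (\<sigma> x) = 0")
  case True
  have "pred_idx jj' x = 0"
  proof (rule pred_idx_eq_0I)
    fix z assume z: "1 \<le> z" "z < x"
    show "jj' z \<noteq> jj' x"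
    proof
      assume eq: "jj' z = jj' x"
      then have "\<sigma> z < \<sigma> x" "jj (\<sigma> z) = jj (\<sigma> x)" "1 \<le> \<sigma> z"
        using mono[OF z(1) x] jj' z x assms(2) by auto
      then show False using True pred_idx_ge[of "\<sigma> z" "\<sigma> x" jj] by simp
    qed
  qed
  moreover have "\<sigma> 0 = 0" using assms(2)[of 0] by simp
  ultimately show ?thesis using True by simp
next
  case False
  let ?y = "\<sigma> (pred_idx jj (\<sigma> x))"
  have p: "1 \<le> \<sigma> ?y" "\<sigma> ?y < \<sigma> x" "jj (\<sigma> ?y) = jj (\<sigma> x)"
    using False pred_idx[of jj "\<sigma> x"] assms(1) by auto
  have y: "1 \<le> ?y" using p(1) assms(2) by blast
  show ?thesis
  proof (rule pred_idx_eqI)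
    show "1 \<le> ?y" by (fact y)
    show "jj' ?y = jj' x" using p(3) jj' x y by simp
    then show "?y < x" using mono[OF y x] p(2) by simp
    fix z assume z: "?y < z" "z < x"
    show "jj' z \<noteq> jj' x"
    proof
      assume eq: "jj' z = jj' x"
      have "1 \<le> z" using z y by simp
      have "\<sigma> ?y < \<sigma> z" "\<sigma> z < \<sigma> x"
        using mono[OF y \<open>1 \<le> z\<close>] mono[OF \<open>1 \<le> z\<close> x] eq \<open>jj' ?y = jj' x\<close> z by auto
      moreover have "jj (\<sigma> z) = jj (\<sigma> x)" "1 \<le> \<sigma> z" using eq jj' \<open>1 \<le> z\<close> x assms(2) by auto
      ultimately show False using pred_idx_ge[of "\<sigma> z" "\<sigma> x" jj] assms(1) by fastforce
    qed
  qed
qed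

definition window_swap :: "nat \<Rightarrow> nat \<Rightarrow> nat" where
  "window_swap k = swap_adj k \<circ> swap_adj (k+2) \<circ> swap_adj (k+4)"

lemma window_swap_eq:
  "window_swap k u = (if u \<in> {k, k+2, k+4} then u+1 else if u \<in> {k+1, k+3, k+5} then u-1 else u)"
  by (auto simp: window_swap_def swap_adj_def)

lemma window_swap_involution [simp]: "window_swap k (window_swap k u) = u"
  by (auto simp: window_swap_eq)

lemma window_swap_outside: "u < k \<or> k+5 < u \<Longrightarrow> window_swap k u = u"
  by (auto simp: window_swap_eq)

lemma window_swap_ge_1_iff: "1 \<le> k \<Longrightarrow> 1 \<le> window_swap k u \<longleftrightarrow> 1 \<le> u"
  by (auto simp: window_swap_eq)

lemma window_swap_in_window: "k \<le> window_swap k u \<and> window_swap k u \<le> k+5 \<longleftrightarrow> k \<le> u \<and> u \<le> k+5"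
  by (auto simp: window_swap_eq)

lemma window_swap_less_iff:
  assumes "x < k \<or> k+5 < x \<or> y < k \<or> k+5 < y"
  shows "window_swap k x < window_swap k y \<longleftrightarrow> x < y"
  using assms window_swap_outside[of x k] window_swap_outside[of y k]
    window_swap_in_window[of k x] window_swap_in_window[of k y]
  by (cases "x < k \<or> k+5 < x"; cases "y < k \<or> k+5 < y") auto

lemma window_swap_eq_iff: "window_swap k x = window_swap k y \<longleftrightarrow> x = y"
  by (metis window_swap_involution)

lemma window_swap_offset:
  "j \<le> 5 \<Longrightarrow> window_swap k (k+j) = k + (if even j then j+1 else j-1)"
  by (cases "j \<in> {0,1,2,3,4,5}") (auto simp: window_swap_eq)

lemma in_window_cases:
  fixes u k :: nat
  assumes "\<not> (u < k \<or> k+5 < u)"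
  obtains j where "u = k+j" "j \<le> 5"
  using assms by (intro that[of "u - k"]) auto

lemma inv_swap_adj: "inv (swap_adj j) = swap_adj j"
  by (rule inv_equality) (auto simp: swap_adj_def)

lemma perm_mat_window_swap:
  "perm_mat (swap_adj (k+4)) (perm_mat (swap_adj (k+2)) (perm_mat (swap_adj k) M)) u v
     = M (window_swap k u) (window_swap k v)"
  by (simp add: perm_mat_def inv_swap_adj window_swap_def)

definition hexagon_mutations :: "nat \<Rightarrow> nat list" where
  "hexagon_mutations k = [k, k+1, k+2, k, k+3, k+1, k, k+2, k+3, k]"

definition window_nodes :: "(nat \<Rightarrow> 'i) \<Rightarrow> nat \<Rightarrow> nat list" where
  "window_nodes jj k = [pred_idx jj k, pred_idx jj (k+1), k, k+1, k+2, k+3, k+4, k+5]"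

locale alternating_window =
  fixes jj :: "nat \<Rightarrow> 'i" and k :: nat and x y :: 'i
  assumes infty: "jj \<in> I_infty" and k_pos: "1 \<le> k"
    and letters: "\<And>j. j \<le> 5 \<Longrightarrow> jj (k+j) = (if even j then x else y)"
    and xy: "x \<noteq> y"
begin

lemma letter_neq: "i \<le> 5 \<Longrightarrow> j \<le> 5 \<Longrightarrow> jj (k+i) = jj (k+j) \<longleftrightarrow> even i = even j"
  using letters[of i] letters[of j] xy by auto

lemma succ_in_window: "j \<le> 3 \<Longrightarrow> succ_idx jj (k+j) = k+j+2"
proof (rule succ_idx_eqI)
  assume "j \<le> 3"
  then show "jj (k+j+2) = jj (k+j)"
    using letter_neq[of "j+2" j] by (simp add: add.assoc)
  fix z assume "k+j < z" "z < k+j+2"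
  then have "z = k+(j+1)" by simp
  then show "jj z \<noteq> jj (k+j)" using letter_neq[of "j+1" j] \<open>j \<le> 3\<close> by simp
qed simp

lemma pred_in_window: "2 \<le> j \<Longrightarrow> j \<le> 5 \<Longrightarrow> pred_idx jj (k+j) = k+(j-2)"
proof (rule pred_idx_eqI)
  assume j: "2 \<le> j" "j \<le> 5"
  then show "jj (k+(j-2)) = jj (k+j)"
    using letter_neq[of "j-2" j] by simp
  show "k+(j-2) < k+j" "1 \<le> k+(j-2)" using j k_pos by auto
  fix z assume "k+(j-2) < z" "z < k+j"
  then have "z = k+(j-1)" by simp
  then show "jj z \<noteq> jj (k+j)" using letter_neq[of "j-1" j] j by simp
qed

lemma succ_after_window:
  assumes "4 \<le> j" "j \<le> 5"
  shows "k+5 < succ_idx jj (k+j)"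
proof -
  have s: "k+j < succ_idx jj (k+j)" "jj (succ_idx jj (k+j)) = jj (k+j)"
    using succ_idx[OF infty] by auto
  have "succ_idx jj (k+4) \<noteq> k+5" if "j = 4" using s(2) letter_neq[of 5 4] that by auto
  then show ?thesis using s(1) assms by (cases "j = 4") auto
qed

lemma pred_before_window: "j \<le> 1 \<Longrightarrow> pred_idx jj (k+j) < k"
  using pred_idx[of jj "k+j"] letter_neq[of 0 j] k_pos by (cases "pred_idx jj (k+j) = k") auto

lemma window_letters:
  "jj k = x" "jj (k+1) = y" "jj (k+2) = x" "jj (k+3) = y" "jj (k+4) = x" "jj (k+5) = y"
  using letters[of 0] letters[of 1] letters[of 2] letters[of 3] letters[of 4] letters[of 5] by simp_all

lemma pred_in_window_nodes: "j \<le> 5 \<Longrightarrow> pred_idx jj (k+j) \<in> set (window_nodes jj k)"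
  using pred_in_window[of j] by (cases "j = 0 \<or> j = 1") (auto simp: window_nodes_def)

lemma succ_outside_window_nodes:
  assumes "1 \<le> u" "u \<notin> set (window_nodes jj k)"
  shows "succ_idx jj u < k \<or> k+5 < succ_idx jj u"
proof (rule ccontr)
  assume "\<not> ?thesis"
  then obtain j where "j \<le> 5" "succ_idx jj u = k+j" by (metis le_add_diff_inverse not_le add_le_cancel_left)
  then show False using pred_succ_idx[OF infty assms(1)] pred_in_window_nodes[of j] assms(2) by auto
qed

lemma window_nodes_cover_window: "k \<le> u \<Longrightarrow> u \<le> k+5 \<Longrightarrow> u \<in> set (window_nodes jj k)"
  by (auto simp: window_nodes_def)

lemma pred_idx_window_neq: "1 \<le> pred_idx jj k \<Longrightarrow> 1 \<le> pred_idx jj (k+1) \<Longrightarrow> pred_idx jj k \<noteq> pred_idx jj (k+1)"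
  using pred_idx[of jj k] pred_idx[of jj "k+1"] window_letters xy by auto

lemma succ_idx_window_neq: "succ_idx jj (k+4) \<noteq> succ_idx jj (k+5)"
  using succ_idx[OF infty, of "k+4"] succ_idx[OF infty, of "k+5"] window_letters xy by auto

lemma exch_matrix_outside_nodes:
  assumes u: "1 \<le> u" "u \<notin> set (window_nodes jj k)" and m: "k \<le> m" "m \<le> k+3"
  shows "exch_matrix C jj u m = 0" "exch_matrix C jj m u = 0"
proof -
  obtain j where j: "m = k+j" "j \<le> 3" using m le_add_diff_inverse by (metis add_le_cancel_left)
  have out: "u < k \<or> k+5 < u" "succ_idx jj u < k \<or> k+5 < succ_idx jj u"
    using u succ_outside_window_nodes window_nodes_cover_window[of u] by force+
  have s: "succ_idx jj m = m+2" using succ_in_window[OF j(2)] j(1) by simp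
  have "pred_idx jj u \<noteq> m"
    using succ_pred_idx[of jj u] s out m k_pos by auto
  moreover have "pred_idx jj m \<noteq> u" using pred_in_window_nodes[of j] u j by auto
  ultimately show "exch_matrix C jj u m = 0" "exch_matrix C jj m u = 0"
    using out s m by (auto simp: exch_matrix_def)
qed

lemma exch_matrix_window_block:
  "block (exch_matrix C jj) (window_nodes jj k) =
     hexagon_block (C x y) (C y x) (1 \<le> pred_idx jj k) (1 \<le> pred_idx jj (k+1))
       (1 \<le> pred_idx jj k \<and> 1 \<le> pred_idx jj (k+1) \<and> pred_idx jj k < pred_idx jj (k+1))
       (succ_idx jj (k+4) < succ_idx jj (k+5))"
proof -
  define p1 p2 where "p1 = pred_idx jj k" and "p2 = pred_idx jj (k+1)"
  define q1 q2 where "q1 = pred_idx jj p1" and "q2 = pred_idx jj p2"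
  define sa sb where "sa = succ_idx jj (k+4)" and "sb = succ_idx jj (k+5)"
  have sw: "succ_idx jj k = k+2" "succ_idx jj (k+1) = k+3" "succ_idx jj (k+2) = k+4" "succ_idx jj (k+3) = k+5"
    using succ_in_window[of 0] succ_in_window[of 1] succ_in_window[of 2] succ_in_window[of 3] by simp_all
  have pw: "pred_idx jj (k+2) = k" "pred_idx jj (k+3) = k+1" "pred_idx jj (k+4) = k+2" "pred_idx jj (k+5) = k+3"
    using pred_in_window[of 2] pred_in_window[of 3] pred_in_window[of 4] pred_in_window[of 5] by simp_all
  have s: "k+5 < sa" "k+5 < sb" "sa \<noteq> sb"
    using succ_after_window[of 4] succ_after_window[of 5] succ_idx_window_neq by (simp_all add: sa_def sb_def)
  have p: "p1 < k" "p2 < k"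
    using pred_before_window[of 0] pred_before_window[of 1] by (simp_all add: p1_def p2_def)
  have p1: "0 < p1 \<longrightarrow> jj p1 = x \<and> succ_idx jj p1 = k \<and> q1 < p1"
    using pred_idx[of jj k] pred_idx[of jj p1] succ_pred_idx[of jj k] window_letters by (auto simp: p1_def q1_def)
  have p2: "0 < p2 \<longrightarrow> jj p2 = y \<and> succ_idx jj p2 = k+1 \<and> q2 < p2"
    using pred_idx[of jj "k+1"] pred_idx[of jj p2] succ_pred_idx[of jj "k+1"] window_letters
    by (auto simp: p2_def q2_def)
  have q: "0 < p1 \<and> 0 < p2 \<longrightarrow> q1 \<noteq> p2 \<and> q2 \<noteq> p1 \<and> p1 \<noteq> p2"
    using p1 p2 pred_idx[of jj p1] pred_idx[of jj p2] xy by (auto simp: q1_def q2_def)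
  note simps = exch_matrix_def window_letters sw pw window_letters[simplified] sw[simplified] pw[simplified]
    q1_def[symmetric] q2_def[symmetric] sa_def[symmetric] sb_def[symmetric] p1_def[symmetric]
    p2_def[symmetric] p2_def[symmetric, simplified] sb_def[symmetric, simplified]
  show ?thesis
    unfolding window_nodes_def block_def hexagon_block_def
      p1_def[symmetric] p2_def[symmetric] sa_def[symmetric] sb_def[symmetric]
    using p s k_pos p1 p2 q
    by (cases "p1 = 0"; cases "p2 = 0") (unfold list.map list.inject; intro conjI; simp add: simps)+
qed

end

locale six_move_window =
  w: alternating_window ii k a b + w': alternating_window ii' k b a
  for ii ii' :: "nat \<Rightarrow> 'i" and k :: nat and a b :: 'i +
  assumes agree_outside: "\<And>u. 1 \<le> u \<Longrightarrow> u < k \<or> k+5 < u \<Longrightarrow> ii' u = ii u"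
begin

abbreviation "\<sigma> \<equiv> window_swap k"

lemma ii'_eq:
  assumes "1 \<le> u"
  shows "ii' u = ii (\<sigma> u)"
proof (cases "u < k \<or> k+5 < u")
  case True
  then show ?thesis using agree_outside[OF assms True] window_swap_outside[OF True] by simp
next
  case False
  then obtain j where "u = k+j" "j \<le> 5" by (rule in_window_cases)
  then show ?thesis
    using w.letters[of "j+1"] w.letters[of "j-1"] w'.letters[of j] window_swap_offset[of j] odd_pos[of j]
    by auto
qed

lemma same_letter_order:
  assumes "1 \<le> u" "1 \<le> v" "ii' u = ii' v"
  shows "u < v \<longleftrightarrow> \<sigma> u < \<sigma> v"
proof (cases "u < k \<or> k+5 < u \<or> v < k \<or> k+5 < v")
  case True
  then show ?thesis using window_swap_less_iff by blast
next
  case False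
  then obtain i j where "u = k+i" "v = k+j" "i \<le> 5" "j \<le> 5"
    by (metis in_window_cases)
  then show ?thesis
    using assms(3) w'.letter_neq[of i j] window_swap_offset[of i] window_swap_offset[of j] odd_pos[of i] odd_pos[of j]
    by auto
qed

lemma ii'_swap: "1 \<le> x \<Longrightarrow> ii' (\<sigma> x) = ii x"
  using ii'_eq[of "\<sigma> x"] window_swap_ge_1_iff[OF w.k_pos] by simp

lemma succ_idx_swap: "1 \<le> x \<Longrightarrow> succ_idx ii' (\<sigma> x) = \<sigma> (succ_idx ii x)"
  using succ_idx_conj[OF w.infty, of \<sigma> ii' "\<sigma> x"] ii'_eq same_letter_order window_swap_ge_1_iff[OF w.k_pos]
  by simp

lemma pred_idx_swap: "1 \<le> x \<Longrightarrow> pred_idx ii' (\<sigma> x) = \<sigma> (pred_idx ii x)"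
  using pred_idx_conj[of \<sigma> ii' ii "\<sigma> x"] ii'_eq same_letter_order window_swap_ge_1_iff[OF w.k_pos]
  by simp

lemma pred_idx_swapped: "pred_idx ii' k = pred_idx ii (k+1)" "pred_idx ii' (k+1) = pred_idx ii k"
  using pred_idx_swap[of "k+1"] pred_idx_swap[of k] w.pred_before_window[of 0] w.pred_before_window[of 1]
    window_swap_outside[of "pred_idx ii k" k] window_swap_outside[of "pred_idx ii (k+1)" k] w.k_pos
  by (simp_all add: window_swap_eq)

lemma succ_idx_swapped: "succ_idx ii' (k+4) = succ_idx ii (k+5)" "succ_idx ii' (k+5) = succ_idx ii (k+4)"
  using succ_idx_swap[of "k+5"] succ_idx_swap[of "k+4"] w.succ_after_window[of 4] w.succ_after_window[of 5]
    window_swap_outside[of "succ_idx ii (k+4)" k] window_swap_outside[of "succ_idx ii (k+5)" k]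
    window_swap_offset[of 4] window_swap_offset[of 5]
  by simp_all

lemma window_nodes_swapped:
  "map \<sigma> (window_nodes ii' k) = map ((!) (window_nodes ii k)) [1,0,3,2,5,4,7,6]"
  using pred_idx_swapped w.pred_before_window[of 0] w.pred_before_window[of 1]
  by (simp add: window_nodes_def window_swap_eq)

lemma set_window_nodes_swapped: "set (window_nodes ii' k) = set (window_nodes ii k)"
  using pred_idx_swapped by (auto simp: window_nodes_def)

lemma exch_matrix_swap:
  assumes "1 \<le> u" "1 \<le> v" "\<sigma> u \<notin> set (window_nodes ii k) \<or> \<sigma> v \<notin> set (window_nodes ii k)"
  shows "exch_matrix C ii' (\<sigma> u) (\<sigma> v) = exch_matrix C ii u v"
proof -
  define out where "out x \<longleftrightarrow> x < k \<or> k+5 < x" for x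
  have mono: "\<sigma> x < \<sigma> y \<longleftrightarrow> x < y" if "out x \<or> out y" for x y
    using that window_swap_less_iff unfolding out_def by blast
  have eqs: "\<sigma> u \<noteq> 0" "\<sigma> v \<noteq> 0" "u \<noteq> 0" "v \<noteq> 0"
    "ii' (\<sigma> u) = ii u" "ii' (\<sigma> v) = ii v"
    "\<sigma> v = succ_idx ii' (\<sigma> u) \<longleftrightarrow> v = succ_idx ii u"
    "\<sigma> v = pred_idx ii' (\<sigma> u) \<longleftrightarrow> v = pred_idx ii u"
    "succ_idx ii' (\<sigma> u) = \<sigma> (succ_idx ii u)" "succ_idx ii' (\<sigma> v) = \<sigma> (succ_idx ii v)"
    using assms(1,2) window_swap_ge_1_iff[OF w.k_pos, of u] window_swap_ge_1_iff[OF w.k_pos, of v]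
      ii'_swap succ_idx_swap pred_idx_swap window_swap_eq_iff by auto
  have "out x \<and> out (succ_idx ii x)" if "1 \<le> x" "\<sigma> x \<notin> set (window_nodes ii k)" for x
  proof -
    have "1 \<le> \<sigma> x" "\<sigma> x \<notin> set (window_nodes ii' k)"
      using that window_swap_ge_1_iff[OF w.k_pos] set_window_nodes_swapped by auto
    then have "out (\<sigma> x)" "out (succ_idx ii' (\<sigma> x))"
      using w'.window_nodes_cover_window[of "\<sigma> x"] w'.succ_outside_window_nodes[of "\<sigma> x"]
      unfolding out_def by force+
    then show ?thesis
      using succ_idx_swap[OF that(1)] window_swap_in_window[of k] unfolding out_def by (metis not_le)
  qed
  then consider "out u" "out (succ_idx ii u)" | "out v" "out (succ_idx ii v)" using assms by blast
  then show ?thesis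
  proof cases
    case 1
    then show ?thesis by (simp add: exch_matrix_def eqs window_swap_eq_iff mono)
  next
    case 2
    then show ?thesis by (simp add: exch_matrix_def eqs window_swap_eq_iff mono)
  qed
qed

lemma block_exch_matrix_mutated:
  assumes "(C a b, C b a) \<in> {(-1,-3), (-3,-1)}"
  shows "block (exch_matrix C ii') (window_nodes ii' k)
       = block (fold mutation (hexagon_mutations k) (exch_matrix C ii)) (map \<sigma> (window_nodes ii' k))"
proof -
  let ?B = "exch_matrix C ii" and ?nd = "window_nodes ii k" and ?ms = "[2,3,4,2,5,3,2,4,5,2]"
  define p1 p2 where "p1 = pred_idx ii k" and "p2 = pred_idx ii (k+1)"
  define sa sb where "sa = succ_idx ii (k+4)" and "sb = succ_idx ii (k+5)"
  have params: "(1 \<le> p1 \<and> 1 \<le> p2 \<and> \<not> (1 \<le> p1 \<and> 1 \<le> p2 \<and> p1 < p2)) = (1 \<le> p2 \<and> 1 \<le> p1 \<and> p2 < p1)"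
    "(\<not> sa < sb) = (sb < sa)"
    using w.pred_idx_window_neq w.succ_idx_window_neq by (auto simp: p1_def p2_def sa_def sb_def)
  have "block (exch_matrix C ii') (window_nodes ii' k)
      = hexagon_block (C b a) (C a b) (1 \<le> p2) (1 \<le> p1)
          (1 \<le> p1 \<and> 1 \<le> p2 \<and> \<not> (1 \<le> p1 \<and> 1 \<le> p2 \<and> p1 < p2)) (\<not> sa < sb)"
    unfolding params using w'.exch_matrix_window_block pred_idx_swapped succ_idx_swapped
    by (simp add: p1_def p2_def sa_def sb_def)
  also have "\<dots> = block (\<lambda>i j. fold list_mutation ?ms
      (hexagon_block (C a b) (C b a) (1 \<le> p1) (1 \<le> p2) (1 \<le> p1 \<and> 1 \<le> p2 \<and> p1 < p2) (sa < sb)) ! i ! j)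
      [1,0,3,2,5,4,7,6]"
    by (rule hexagon_block_mutation[OF assms, symmetric]) simp
  also have "\<dots> = block (\<lambda>i j. fold list_mutation ?ms (block ?B ?nd) ! i ! j) [1,0,3,2,5,4,7,6]"
    unfolding w.exch_matrix_window_block p1_def p2_def sa_def sb_def ..
  also have "\<dots> = block (\<lambda>i j. fold mutation (hexagon_mutations k) ?B (?nd ! i) (?nd ! j)) [1,0,3,2,5,4,7,6]"
  proof (rule block_cong)
    have len: "length ?nd = 8" by (simp add: window_nodes_def)
    have inj: "i = m" if "i < length ?nd" "m \<in> set ?ms" "?nd ! i = ?nd ! m" for i m
    proof -
      have "i \<in> {0,1,2,3,4,5,6,7}" "m \<in> {2,3,4,5}" using that(1,2) len by auto
      then show ?thesis
        using that(3) w.pred_before_window[of 0] w.pred_before_window[of 1] by (auto simp: window_nodes_def)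
    qed
    have ms: "hexagon_mutations k = map ((!) ?nd) ?ms"
      by (simp add: hexagon_mutations_def window_nodes_def)
    fix i j :: nat assume "i \<in> set [1,0,3,2,5,4,7,6]" "j \<in> set [1,0,3,2,5,4,7,6]"
    then show "fold list_mutation ?ms (block ?B ?nd) ! i ! j
        = fold mutation (hexagon_mutations k) ?B (?nd ! i) (?nd ! j)"
      unfolding ms using len by (intro fold_list_mutation_block[OF inj]) auto
  qed
  also have "\<dots> = block (fold mutation (hexagon_mutations k) ?B) (map \<sigma> (window_nodes ii' k))"
    by (simp add: block_reindex window_nodes_swapped)
  finally show ?thesis .
qed

lemma exch_matrix_mutated_off_block:
  assumes "1 \<le> u" "1 \<le> v" "u \<notin> set (window_nodes ii k) \<or> v \<notin> set (window_nodes ii k)"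
  shows "exch_matrix C ii' u v = fold mutation (hexagon_mutations k) (exch_matrix C ii) (\<sigma> u) (\<sigma> v)"
proof -
  let ?B = "exch_matrix C ii" and ?nd = "window_nodes ii k"
  have "1 \<le> \<sigma> u" "1 \<le> \<sigma> v" using assms(1,2) window_swap_ge_1_iff[OF w.k_pos] by auto
  then have swap: "exch_matrix C ii' u v = ?B (\<sigma> u) (\<sigma> v)"
    using exch_matrix_swap[of "\<sigma> u" "\<sigma> v"] assms(3) by auto
  have fixed: "\<sigma> x = x" if "x \<notin> set ?nd" for x
    using that w.window_nodes_cover_window[of x] window_swap_outside[of x k] by fastforce
  have zero: "\<forall>m\<in>set (hexagon_mutations k). ?B x m = 0 \<and> ?B m x = 0 \<and> x \<noteq> m"
    if "1 \<le> x" "x \<notin> set ?nd" for x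
    using that w.exch_matrix_outside_nodes[OF that] w.window_nodes_cover_window
    by (auto simp: hexagon_mutations_def)
  show ?thesis
  proof (cases "u \<in> set ?nd")
    case False
    then show ?thesis
      using swap fixed[OF False] zero[OF assms(1) False] by (simp add: fold_mutation_row_unchanged)
  next
    case True
    then have "v \<notin> set ?nd" using assms(3) by blast
    then show ?thesis
      using swap fixed[OF \<open>v \<notin> set ?nd\<close>] zero[OF assms(2) \<open>v \<notin> set ?nd\<close>]
      by (simp add: fold_mutation_col_unchanged)
  qed
qed

theorem exch_matrix_six_move:
  assumes "(C a b, C b a) \<in> {(-1,-3), (-3,-1)}"
  shows "exch_matrix C ii' = perm_mat (swap_adj (k+4)) (perm_mat (swap_adj (k+2)) (perm_mat (swap_adj k)
           (fold mutate (hexagon_mutations k) (exch_matrix C ii))))"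
proof -
  let ?B = "exch_matrix C ii" and ?nd' = "window_nodes ii' k"
  define M where "M = fold mutation (hexagon_mutations k) ?B"
  have B0: "null_at_0 ?B" by (simp add: null_at_0_def exch_matrix_def)
  have pos: "\<forall>m\<in>set (hexagon_mutations k). 1 \<le> m" using w.k_pos by (simp add: hexagon_mutations_def)
  have entry: "exch_matrix C ii' u v = M (\<sigma> u) (\<sigma> v)" for u v
  proof -
    consider "u = 0 \<or> v = 0" | "u \<in> set ?nd' \<and> v \<in> set ?nd'" | "1 \<le> u" "1 \<le> v" "u \<notin> set ?nd' \<or> v \<notin> set ?nd'"
      by fastforce
    then show ?thesis
    proof cases
      case 1
      have "null_at_0 M" unfolding M_def using pos B0 by (rule null_at_0_fold_mutation)
      moreover have "\<sigma> 0 = 0" using window_swap_ge_1_iff[OF w.k_pos, of 0] by simp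
      ultimately show ?thesis using 1 by (auto simp: null_at_0_def exch_matrix_def)
    next
      case 2
      then show ?thesis
        using block_eq_block_mapD[OF block_exch_matrix_mutated[OF assms]] unfolding M_def by blast
    next
      case 3
      then show ?thesis
        using exch_matrix_mutated_off_block set_window_nodes_swapped unfolding M_def by simp
    qed
  qed
  have "fold mutate (hexagon_mutations k) ?B = M"
    unfolding M_def using pos B0 by (rule fold_mutate_eq_fold_mutation)
  then show ?thesis by (intro ext) (simp only: perm_mat_window_swap entry)
qed

end

lemma int_nonpos_mult_eq_3:
  fixes x y :: int
  assumes "x \<le> 0" "y \<le> 0" "x * y = 3"
  shows "(x, y) \<in> {(-1,-3), (-3,-1)}"
proof -
  have neg: "x \<le> -1" "y \<le> -1" using assms by (auto simp: order.order_iff_strict)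
  have "0 \<le> (y + 1) * x" using neg by (intro mult_nonpos_nonpos) auto
  then have "-3 \<le> x" using assms(3) by (simp add: algebra_simps)
  then have "x = -1 \<or> x = -2 \<or> x = -3" using neg by auto
  then show ?thesis using assms(3) by (auto; presburger)
qed

theorem lemma3p11:
  fixes C :: "'i::finite \<Rightarrow> 'i \<Rightarrow> int" and ii ii' :: "nat \<Rightarrow> 'i" and k :: nat
  assumes "is_simple_cartan_matrix C"
    and "ii \<in> I_infty" and "ii' \<in> I_infty"
    and "six_move C k ii ii'"
  shows "exch_matrix C ii' =
    perm_mat (swap_adj (k+4)) (perm_mat (swap_adj (k+2)) (perm_mat (swap_adj k)
      (mutate k (mutate (k+3) (mutate (k+2) (mutate k (mutate (k+1) (mutate (k+3)
        (mutate k (mutate (k+2) (mutate (k+1) (mutate k (exch_matrix C ii)))))))))))))"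
proof -
  let ?a = "ii k" and ?b = "ii (k+1)"
  have diag: "C i i = 2" and offdiag: "i \<noteq> j \<Longrightarrow> C i j \<le> 0" for i j
    using assms(1) unfolding is_simple_cartan_matrix_def by auto
  have sm: "1 \<le> k"
    "ii k = ii (k+2)" "ii (k+2) = ii (k+4)" "ii (k+4) = ii' (k+1)"
    "ii' (k+1) = ii' (k+3)" "ii' (k+3) = ii' (k+5)"
    "ii (k+1) = ii (k+3)" "ii (k+3) = ii (k+5)" "ii (k+5) = ii' k"
    "ii' k = ii' (k+2)" "ii' (k+2) = ii' (k+4)"
    "\<And>u. 1 \<le> u \<Longrightarrow> u < k \<or> k+5 < u \<Longrightarrow> ii' u = ii u"
    "C ?b ?a * C ?a ?b = 3"
    using assms(4) unfolding six_move_def by auto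
  have letters: "ii (k+j) = (if even j then ?a else ?b)" "ii' (k+j) = (if even j then ?b else ?a)"
    if "j \<le> 5" for j
    using that sm(2-11) by (cases "j \<in> {0,1,2,3,4,5}"; auto)+
  have ab: "?a \<noteq> ?b" using sm(13) diag by auto
  interpret six_move_window ii ii' k ?a ?b
    using assms(2,3) sm(1,12) letters ab by unfold_locales auto
  have "(C ?a ?b, C ?b ?a) \<in> {(-1,-3), (-3,-1)}"
    using int_nonpos_mult_eq_3[OF offdiag offdiag] ab sm(13) by (simp add: mult.commute)
  then show ?thesis using exch_matrix_six_move by (simp add: hexagon_mutations_def)
qed

end
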